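(* For every instance \(\mathcal{I}\) of 3-SAT, the graph \(G(\mathcal{I})\) constructed below is weakly chordal.
   Context: A graph is weakly chordal if neither it nor its complement contains an induced cycle of length at least 5. Let \(\mathcal{I}\) have variables \(x_1,\dots,x_k\) and clauses \(C_1,\dots,C_l\), each a disjunction of three literals. \(G(\mathcal{I})\) has vertices: literal vertices \(X=\{x_1,\dots,x_k,\overline{x_1},\dots,\overline{x_k}\}\), clause vertices \(c_1,\dots,c_l\), and six vertices \(r,p,q,a,b,t\). Edges: any two vertices of \(X\) are adjacent except the pairs \(x_j\overline{x_j}\); the clause vertices are pairwise nonadjacent; \(c_i\) is adjacent to every vertex of \(X\) except the three literal vertices of the literals of \(C_i\); each of \(r,p,q,a\) is adjacent to all literal vertices and all clause vertices; \(b\) is adjacent to all literal vertices; additionally the edges \(ab,ap,aq,bq,br,bt,pr,qr,qt\); no other edges. *)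

theory Defs
  imports Main
begin

definition induced_cycle :: "'a set \<Rightarrow> ('a \<Rightarrow> 'a \<Rightarrow> bool) \<Rightarrow> 'a list \<Rightarrow> bool" where
  "induced_cycle V E cs \<longleftrightarrow>
     length cs \<ge> 3 \<and> distinct cs \<and> set cs \<subseteq> V \<and>
     (\<forall>i<length cs. \<forall>j<length cs. i \<noteq> j \<longrightarrow>
        (E (cs!i) (cs!j) \<longleftrightarrow> (j = Suc i mod length cs \<or> i = Suc j mod length cs)))"

definition complement_adj :: "('a \<Rightarrow> 'a \<Rightarrow> bool) \<Rightarrow> 'a \<Rightarrow> 'a \<Rightarrow> bool" where
  "complement_adj E u v \<longleftrightarrow> u \<noteq> v \<and> \<not> E u v"

definition weakly_chordal :: "'a set \<Rightarrow> ('a \<Rightarrow> 'a \<Rightarrow> bool) \<Rightarrow> bool" where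
  "weakly_chordal V E \<longleftrightarrow>
     (\<forall>cs. induced_cycle V E cs \<longrightarrow> length cs < 5) \<and>
     (\<forall>cs. induced_cycle V (complement_adj E) cs \<longrightarrow> length cs < 5)"

text \<open>A literal is a pair (j, b): variable x_j if b = True, its negation if b = False.\<close>
type_synonym literal = "nat \<times> bool"

definition sat3_instance :: "nat \<Rightarrow> literal set list \<Rightarrow> bool" where
  "sat3_instance k C \<longleftrightarrow> (\<forall>c\<in>set C. card c = 3 \<and> (\<forall>(j, b)\<in>c. j < k))"

datatype vertex = Lit nat bool | Cl nat | R | P | Q | A | B | T

definition G_verts :: "nat \<Rightarrow> literal set list \<Rightarrow> vertex set" where
  "G_verts k C = {Lit j b | j b. j < k} \<union> {Cl i | i. i < length C} \<union> {R, P, Q, A, B, T}"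

fun G_base :: "literal set list \<Rightarrow> vertex \<Rightarrow> vertex \<Rightarrow> bool" where
  "G_base C (Lit j b) (Lit j' b') = (j \<noteq> j')"
| "G_base C (Cl i) (Lit j b) = ((j, b) \<notin> C ! i)"
| "G_base C R (Lit j b) = True"
| "G_base C P (Lit j b) = True"
| "G_base C Q (Lit j b) = True"
| "G_base C A (Lit j b) = True"
| "G_base C B (Lit j b) = True"
| "G_base C R (Cl i) = True"
| "G_base C P (Cl i) = True"
| "G_base C Q (Cl i) = True"
| "G_base C A (Cl i) = True"
| "G_base C A B = True"
| "G_base C A P = True"
| "G_base C A Q = True"
| "G_base C B Q = True"
| "G_base C B R = True"
| "G_base C B T = True"
| "G_base C P R = True"
| "G_base C Q R = True"
| "G_base C Q T = True"
| "G_base C _ _ = False"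

definition G_adj :: "literal set list \<Rightarrow> vertex \<Rightarrow> vertex \<Rightarrow> bool" where
  "G_adj C u v \<longleftrightarrow> u \<noteq> v \<and> (G_base C u v \<or> G_base C v u)"

end

theory Submission
  imports Defs
begin

text \<open>Every vertex of an induced cycle of length at least 5, in a graph or in its complement, has
  two non-adjacent neighbours and two adjacent non-neighbours on the cycle. In G(I) the vertices
  a, r, q have no two adjacent non-neighbours and t has no two non-adjacent neighbours; without q
  and t the same holds for p, and without p for b. So a long hole or antihole uses only literal and
  clause vertices, where the literals induce a complete graph minus the perfect matching of
  complementary pairs and the clauses an independent set.
  In a hole, the two cycle-neighbours of a clause vertex are complementary literals; walking on,
  the next vertex must again be a clause vertex, which leads back to the first literal after four
  steps. Without clause vertices, a literal would have two literal non-neighbours on the cycle.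
  In an antihole, clause vertices are pairwise adjacent and every literal needs a clause vertex
  among its two cycle-neighbours; from one clause vertex this forces clause vertices at distance 1
  and 4 from it, which are non-adjacent.\<close>

definition cyc_nth :: "'a list \<Rightarrow> nat \<Rightarrow> 'a" where
  "cyc_nth cs i = cs ! (i mod length cs)"

lemma cyc_nth_in_set: "cs \<noteq> [] \<Longrightarrow> cyc_nth cs i \<in> set cs"
  by (simp add: cyc_nth_def)

lemma induced_cycle_cyc_nth_in_set: "induced_cycle V E cs \<Longrightarrow> cyc_nth cs i \<in> set cs"
  by (auto simp: induced_cycle_def intro: cyc_nth_in_set)

lemma in_set_cyc_nth_Suc:
  assumes "x \<in> set cs"
  shows "\<exists>i. x = cyc_nth cs (Suc i)"
proof -
  obtain j where j: "j < length cs" "x = cs ! j"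
    using assms by (auto simp: in_set_conv_nth)
  then have "Suc (j + length cs - 1) = j + length cs"
    by simp
  with j have "x = cyc_nth cs (Suc (j + length cs - 1))"
    by (simp add: cyc_nth_def)
  then show ?thesis ..
qed

lemma induced_cycle_adj_commute:
  assumes "induced_cycle V E cs" "x \<in> set cs" "y \<in> set cs"
  shows "E x y \<longleftrightarrow> E y x"
  using assms unfolding induced_cycle_def in_set_conv_nth by (metis (no_types, lifting))

lemma induced_cycle_cyc_nth_adj_iff:
  assumes cyc: "induced_cycle V E cs" and d: "0 < d" "d < length cs"
  shows "E (cyc_nth cs i) (cyc_nth cs (i + d)) \<longleftrightarrow> d = 1 \<or> Suc d = length cs"
    and "cyc_nth cs (i + d) \<noteq> cyc_nth cs i"
proof -
  let ?n = "length cs" and ?a = "i mod length cs" and ?b = "(i + d) mod length cs"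
  have "?a < ?n" "?b < ?n"
    using d by (meson less_trans mod_less_divisor)+
  have "?b \<noteq> ?a"
    using d mod_eq_dvd_iff_nat[of i "i + d" ?n] by (auto dest: dvd_imp_le)
  have "?b = Suc ?a mod ?n \<longleftrightarrow> ?n dvd (d - 1)"
    using mod_eq_dvd_iff_nat[of "Suc i" "i + d" ?n] d by (simp add: mod_Suc_eq)
  also have "\<dots> \<longleftrightarrow> d = 1"
    using d by (auto dest: dvd_imp_le)
  finally have next_iff: "?b = Suc ?a mod ?n \<longleftrightarrow> d = 1" .
  have "?a = Suc ?b mod ?n \<longleftrightarrow> ?n dvd (d + 1)"
    using mod_eq_dvd_iff_nat[of i "Suc (i + d)" ?n] by (simp add: mod_Suc_eq eq_commute)
  also have "\<dots> \<longleftrightarrow> Suc d = ?n"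
    using d by (auto dest: dvd_imp_le)
  finally have prev_iff: "?a = Suc ?b mod ?n \<longleftrightarrow> Suc d = ?n" .
  show "E (cyc_nth cs i) (cyc_nth cs (i + d)) \<longleftrightarrow> d = 1 \<or> Suc d = ?n"
    using cyc \<open>?a < ?n\<close> \<open>?b < ?n\<close> \<open>?b \<noteq> ?a\<close> next_iff prev_iff
    unfolding induced_cycle_def cyc_nth_def by metis
  show "cyc_nth cs (i + d) \<noteq> cyc_nth cs i"
    using cyc \<open>?a < ?n\<close> \<open>?b < ?n\<close> \<open>?b \<noteq> ?a\<close>
    unfolding induced_cycle_def cyc_nth_def by (simp add: nth_eq_iff_index_eq)
qed

lemma long_induced_cycle_window:
  assumes cyc: "induced_cycle V E cs" and n: "5 \<le> length cs" and kl: "k < l"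
  shows "l \<le> k + 3 \<Longrightarrow> E (cyc_nth cs (i + k)) (cyc_nth cs (i + l)) \<longleftrightarrow> l = k + 1"
    and "l \<le> k + 3 \<Longrightarrow> E (cyc_nth cs (i + l)) (cyc_nth cs (i + k)) \<longleftrightarrow> l = k + 1"
    and "l \<le> k + 4 \<Longrightarrow> cyc_nth cs (i + l) \<noteq> cyc_nth cs (i + k)"
proof -
  have d: "0 < l - k" and shift: "i + k + (l - k) = i + l"
    using kl by simp_all
  have "E (cyc_nth cs (i + l)) (cyc_nth cs (i + k)) \<longleftrightarrow> E (cyc_nth cs (i + k)) (cyc_nth cs (i + l))"
    using induced_cycle_adj_commute[OF cyc] induced_cycle_cyc_nth_in_set[OF cyc] by blast
  then show "l \<le> k + 3 \<Longrightarrow> E (cyc_nth cs (i + k)) (cyc_nth cs (i + l)) \<longleftrightarrow> l = k + 1"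
    and "l \<le> k + 3 \<Longrightarrow> E (cyc_nth cs (i + l)) (cyc_nth cs (i + k)) \<longleftrightarrow> l = k + 1"
    using induced_cycle_cyc_nth_adj_iff(1)[OF cyc d, of "i + k"] n kl unfolding shift by auto
  show "l \<le> k + 4 \<Longrightarrow> cyc_nth cs (i + l) \<noteq> cyc_nth cs (i + k)"
    using induced_cycle_cyc_nth_adj_iff(2)[OF cyc d, of "i + k"] n unfolding shift by auto
qed

definition has_nonadjacent_neighbours :: "('a \<Rightarrow> 'a \<Rightarrow> bool) \<Rightarrow> 'a set \<Rightarrow> 'a \<Rightarrow> bool" where
  "has_nonadjacent_neighbours E S v \<longleftrightarrow> (\<exists>x\<in>S. \<exists>y\<in>S. x \<noteq> y \<and> E v x \<and> E v y \<and> \<not> E x y)"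

definition has_adjacent_nonneighbours :: "('a \<Rightarrow> 'a \<Rightarrow> bool) \<Rightarrow> 'a set \<Rightarrow> 'a \<Rightarrow> bool" where
  "has_adjacent_nonneighbours E S v \<longleftrightarrow>
     (\<exists>x\<in>S. \<exists>y\<in>S. x \<noteq> v \<and> y \<noteq> v \<and> \<not> E v x \<and> \<not> E v y \<and> E x y)"

lemma has_nonadjacent_neighbours_complement:
  "has_nonadjacent_neighbours (complement_adj E) S v \<Longrightarrow> has_adjacent_nonneighbours E S v"
  unfolding has_nonadjacent_neighbours_def has_adjacent_nonneighbours_def complement_adj_def
  by metis

lemma has_adjacent_nonneighbours_complement:
  "has_adjacent_nonneighbours (complement_adj E) S v \<Longrightarrow> has_nonadjacent_neighbours E S v"
  unfolding has_nonadjacent_neighbours_def has_adjacent_nonneighbours_def complement_adj_def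
  by metis

lemma long_induced_cycle_vertex:
  assumes cyc: "induced_cycle V E cs" and n: "5 \<le> length cs" and v: "v \<in> set cs"
  shows "has_nonadjacent_neighbours E (set cs) v \<and> has_adjacent_nonneighbours E (set cs) v"
proof -
  obtain i where "v = cyc_nth cs (i + 1)"
    using in_set_cyc_nth_Suc[OF v] by auto
  define w where "w k = cyc_nth cs (i + k)" for k
  have v_eq: "v = w 1"
    by (simp add: w_def \<open>v = cyc_nth cs (i + 1)\<close>)
  have mem: "w k \<in> set cs" for k
    by (simp add: w_def induced_cycle_cyc_nth_in_set[OF cyc])
  note window = long_induced_cycle_window[OF cyc n, of _ _ i, folded w_def]
  have "E v (w 0)" "E v (w 2)" "\<not> E (w 0) (w 2)" "w 0 \<noteq> w 2"
    using window(2)[of 0 1] window(1)[of 1 2] window(1)[of 0 2] window(3)[of 0 2]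
    by (simp_all add: v_eq)
  then have "has_nonadjacent_neighbours E (set cs) v"
    unfolding has_nonadjacent_neighbours_def using mem by blast
  have "\<not> E v (w 3)" "\<not> E v (w 4)" "E (w 3) (w 4)" "w 3 \<noteq> v" "w 4 \<noteq> v"
    using window(1)[of 1 3] window(1)[of 1 4] window(1)[of 3 4] window(3)[of 1 3] window(3)[of 1 4]
    by (simp_all add: v_eq)
  then have "has_adjacent_nonneighbours E (set cs) v"
    unfolding has_adjacent_nonneighbours_def using mem by blast
  with \<open>has_nonadjacent_neighbours E (set cs) v\<close> show ?thesis ..
qed

lemma long_complement_induced_cycle_vertex:
  assumes "induced_cycle V (complement_adj E) cs" "5 \<le> length cs" "v \<in> set cs"
  shows "has_nonadjacent_neighbours E (set cs) v \<and> has_adjacent_nonneighbours E (set cs) v"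
  using long_induced_cycle_vertex[OF assms] has_nonadjacent_neighbours_complement[of E]
    has_adjacent_nonneighbours_complement[of E] by blast

definition literal_or_clause_vertices :: "vertex set" where
  "literal_or_clause_vertices = {Lit j b | j b. True} \<union> range Cl"

lemma G_adj_Lit_Lit [simp]: "G_adj C (Lit j b) (Lit j' b') \<longleftrightarrow> j \<noteq> j'"
  by (auto simp: G_adj_def)

lemma G_adj_Cl_Cl [simp]: "\<not> G_adj C (Cl m) (Cl m')"
  by (simp add: G_adj_def)

lemma G_long_induced_cycle_vertices:
  assumes "\<forall>v\<in>S. has_nonadjacent_neighbours (G_adj C) S v \<and> has_adjacent_nonneighbours (G_adj C) S v"
  shows "S \<subseteq> literal_or_clause_vertices"
proof -
  have "\<not> (x \<noteq> v \<and> y \<noteq> v \<and> \<not> G_adj C v x \<and> \<not> G_adj C v y \<and> G_adj C x y)"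
    if "v \<in> {A, R, Q}" for v x y
    using that by (cases x; cases y) (auto simp: G_adj_def)
  moreover have "\<not> (x \<noteq> y \<and> G_adj C T x \<and> G_adj C T y \<and> \<not> G_adj C x y)" for x y
    by (cases x; cases y) (simp_all add: G_adj_def)
  ultimately have "A \<notin> S" "R \<notin> S" "Q \<notin> S" "T \<notin> S"
    using assms unfolding has_adjacent_nonneighbours_def has_nonadjacent_neighbours_def
    by (metis insertCI)+
  moreover have "Q \<in> {x, y} \<or> T \<in> {x, y}"
    if "x \<noteq> P" "y \<noteq> P" "\<not> G_adj C P x" "\<not> G_adj C P y" "G_adj C x y" for x y
    using that by (cases x; cases y) (simp_all add: G_adj_def)
  ultimately have "P \<notin> S"
    using assms unfolding has_adjacent_nonneighbours_def by blast
  moreover have "P \<in> {x, y}"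
    if "x \<noteq> B" "y \<noteq> B" "\<not> G_adj C B x" "\<not> G_adj C B y" "G_adj C x y" for x y
    using that by (cases x; cases y) (simp_all add: G_adj_def)
  ultimately have "B \<notin> S"
    using assms unfolding has_adjacent_nonneighbours_def by blast
  show ?thesis
  proof
    fix v assume "v \<in> S"
    with \<open>A \<notin> S\<close> \<open>B \<notin> S\<close> \<open>P \<notin> S\<close> \<open>Q \<notin> S\<close> \<open>R \<notin> S\<close> \<open>T \<notin> S\<close>
    show "v \<in> literal_or_clause_vertices"
      unfolding literal_or_clause_vertices_def by (cases v) auto
  qed
qed

lemma G_literal_nonneighbours:
  assumes "\<not> G_adj C (Lit j b) u" "\<not> G_adj C (Lit j b) w" "u \<noteq> Lit j b" "w \<noteq> Lit j b" "u \<noteq> w"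
    and "u \<in> literal_or_clause_vertices" "w \<in> literal_or_clause_vertices"
  shows "u \<in> range Cl \<or> w \<in> range Cl"
  using assms unfolding literal_or_clause_vertices_def by auto

lemma G_clause_nonadjacent_neighbours:
  assumes "G_adj C (Cl m) u" "G_adj C (Cl m) w" "\<not> G_adj C u w" "u \<noteq> w"
    and "u \<in> literal_or_clause_vertices" "w \<in> literal_or_clause_vertices"
  shows "\<exists>j b. u = Lit j b \<and> w = Lit j (\<not> b)"
  using assms unfolding literal_or_clause_vertices_def by auto

lemma G_long_induced_cycle_no_clause:
  assumes cyc: "induced_cycle V (G_adj C) cs" and n: "5 \<le> length cs"
    and lc: "set cs \<subseteq> literal_or_clause_vertices"
  shows "cyc_nth cs i \<notin> range Cl"
proof
  obtain i' where "cyc_nth cs i = cyc_nth cs (i' + 1)"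
    using in_set_cyc_nth_Suc[OF induced_cycle_cyc_nth_in_set[OF cyc]] by auto
  define w where "w k = cyc_nth cs (i' + k)" for k
  note window = long_induced_cycle_window[OF cyc n, of _ _ i', folded w_def]
  have lc_w: "w k \<in> literal_or_clause_vertices" for k
    using lc induced_cycle_cyc_nth_in_set[OF cyc] by (auto simp: w_def)
  assume "cyc_nth cs i \<in> range Cl"
  then obtain m where "w 1 = Cl m"
    by (auto simp: w_def \<open>cyc_nth cs i = cyc_nth cs (i' + 1)\<close>)
  then have "G_adj C (Cl m) (w 0)" "G_adj C (Cl m) (w 2)" "\<not> G_adj C (w 0) (w 2)" "w 0 \<noteq> w 2"
    using window(2)[of 0 1] window(1)[of 1 2] window(1)[of 0 2] window(3)[of 0 2] by simp_all
  then obtain j b where w0: "w 0 = Lit j b" and w2: "w 2 = Lit j (\<not> b)"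
    using G_clause_nonadjacent_neighbours lc_w by blast
  have "\<not> G_adj C (Lit j b) (w 2)" "\<not> G_adj C (Lit j b) (w 3)" "w 2 \<noteq> Lit j b" "w 3 \<noteq> Lit j b"
    "w 2 \<noteq> w 3"
    using window(1)[of 0 2] window(1)[of 0 3] window(3)[of 0 2] window(3)[of 0 3] window(3)[of 2 3]
    by (simp_all add: w0)
  then have "w 2 \<in> range Cl \<or> w 3 \<in> range Cl"
    using G_literal_nonneighbours lc_w by blast
  with w2 obtain m' where "w 3 = Cl m'"
    by auto
  then have "G_adj C (Cl m') (w 2)" "G_adj C (Cl m') (w 4)" "\<not> G_adj C (w 2) (w 4)" "w 2 \<noteq> w 4"
    using window(2)[of 2 3] window(1)[of 3 4] window(1)[of 2 4] window(3)[of 2 4] by simp_all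
  then obtain j' b' where "w 2 = Lit j' b'" and "w 4 = Lit j' (\<not> b')"
    using G_clause_nonadjacent_neighbours lc_w by blast
  with w0 w2 have "w 4 = w 0"
    by simp
  with window(3)[of 0 4] show False
    by simp
qed

lemma G_no_long_induced_cycle_of_literals_and_clauses:
  assumes cyc: "induced_cycle V (G_adj C) cs" and n: "5 \<le> length cs"
    and lc: "set cs \<subseteq> literal_or_clause_vertices"
  shows False
proof -
  define w where "w k = cyc_nth cs (0 + k)" for k
  note window = long_induced_cycle_window[OF cyc n, of _ _ 0, folded w_def]
  have lc_w: "w k \<in> literal_or_clause_vertices" and literal_w: "w k \<notin> range Cl" for k
    using lc induced_cycle_cyc_nth_in_set[OF cyc] G_long_induced_cycle_no_clause[OF assms]
    by (auto simp: w_def)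
  then obtain j b where w0: "w 0 = Lit j b"
    unfolding literal_or_clause_vertices_def by blast
  have "\<not> G_adj C (Lit j b) (w 2)" "\<not> G_adj C (Lit j b) (w 3)"
    "w 2 \<noteq> Lit j b" "w 3 \<noteq> Lit j b" "w 2 \<noteq> w 3"
    using window(1)[of 0 2] window(1)[of 0 3] window(3)[of 0 2] window(3)[of 0 3] window(3)[of 2 3]
    by (simp_all add: w0)
  then have "w 2 \<in> range Cl \<or> w 3 \<in> range Cl"
    using G_literal_nonneighbours lc_w by blast
  with literal_w show False
    by blast
qed

lemma G_literal_complement_neighbours:
  assumes "complement_adj (G_adj C) (Lit j b) u" "complement_adj (G_adj C) (Lit j b) w" "u \<noteq> w"
    and "u \<in> literal_or_clause_vertices" "w \<in> literal_or_clause_vertices"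
  shows "u \<in> range Cl \<or> w \<in> range Cl"
  using assms G_literal_nonneighbours unfolding complement_adj_def by metis

lemma G_clauses_complement_adj:
  "u \<in> range Cl \<Longrightarrow> w \<in> range Cl \<Longrightarrow> u \<noteq> w \<Longrightarrow> complement_adj (G_adj C) u w"
  by (auto simp: complement_adj_def)

lemma G_long_complement_induced_cycle_clause:
  assumes cyc: "induced_cycle V (complement_adj (G_adj C)) cs" and n: "5 \<le> length cs"
    and lc: "set cs \<subseteq> literal_or_clause_vertices"
  obtains q where "cyc_nth cs q \<in> range Cl"
proof (cases "cyc_nth cs 1 \<in> range Cl")
  case False
  define w where "w k = cyc_nth cs (0 + k)" for k
  note window = long_induced_cycle_window[OF cyc n, of _ _ 0, folded w_def]
  have lc_w: "w k \<in> literal_or_clause_vertices" for k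
    using lc induced_cycle_cyc_nth_in_set[OF cyc] by (auto simp: w_def)
  from False obtain j b where "w 1 = Lit j b"
    using lc_w[of 1] unfolding w_def literal_or_clause_vertices_def by auto
  then have "complement_adj (G_adj C) (Lit j b) (w 0)" "complement_adj (G_adj C) (Lit j b) (w 2)"
    "w 0 \<noteq> w 2"
    using window(2)[of 0 1] window(1)[of 1 2] window(3)[of 0 2] by simp_all
  then have "w 0 \<in> range Cl \<or> w 2 \<in> range Cl"
    using G_literal_complement_neighbours lc_w by blast
  then show thesis
    using that unfolding w_def by auto
qed (rule that)

lemma G_no_long_complement_induced_cycle_of_literals_and_clauses:
  assumes cyc: "induced_cycle V (complement_adj (G_adj C)) cs" and n: "5 \<le> length cs"
    and lc: "set cs \<subseteq> literal_or_clause_vertices"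
  shows False
proof -
  obtain q where "cyc_nth cs q \<in> range Cl"
    using G_long_complement_induced_cycle_clause[OF assms] .
  define w where "w k = cyc_nth cs (q + k)" for k
  note window = long_induced_cycle_window[OF cyc n, of _ _ q, folded w_def]
  have lc_w: "w k \<in> literal_or_clause_vertices" for k
    using lc induced_cycle_cyc_nth_in_set[OF cyc] by (auto simp: w_def)
  have "w 0 \<in> range Cl"
    by (simp add: w_def \<open>cyc_nth cs q \<in> range Cl\<close>)
  then have "w 2 \<notin> range Cl" "w 3 \<notin> range Cl"
    using G_clauses_complement_adj window(1)[of 0 2] window(1)[of 0 3] window(3)[of 0 2] window(3)[of 0 3]
    by auto
  then obtain j b j' b' where w2: "w 2 = Lit j b" and w3: "w 3 = Lit j' b'"
    using lc_w unfolding literal_or_clause_vertices_def by blast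
  have "complement_adj (G_adj C) (Lit j b) (w 1)" "complement_adj (G_adj C) (Lit j b) (w 3)" "w 1 \<noteq> w 3"
    using window(2)[of 1 2] window(1)[of 2 3] window(3)[of 1 3] by (simp_all add: w2)
  with \<open>w 3 \<notin> range Cl\<close> have "w 1 \<in> range Cl"
    using G_literal_complement_neighbours lc_w by blast
  have "complement_adj (G_adj C) (Lit j' b') (w 2)" "complement_adj (G_adj C) (Lit j' b') (w 4)" "w 2 \<noteq> w 4"
    using window(2)[of 2 3] window(1)[of 3 4] window(3)[of 2 4] by (simp_all add: w3)
  with \<open>w 2 \<notin> range Cl\<close> have "w 4 \<in> range Cl"
    using G_literal_complement_neighbours lc_w by blast
  with \<open>w 1 \<in> range Cl\<close> show False
    using G_clauses_complement_adj window(1)[of 1 4] window(3)[of 1 4] by auto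
qed

lemma G_induced_cycle_length:
  assumes cyc: "induced_cycle V (G_adj C) cs"
  shows "length cs < 5"
proof (rule ccontr)
  assume "\<not> length cs < 5"
  then have n: "5 \<le> length cs"
    by simp
  then have "set cs \<subseteq> literal_or_clause_vertices"
    using G_long_induced_cycle_vertices long_induced_cycle_vertex[OF cyc n] by blast
  with cyc n show False
    by (rule G_no_long_induced_cycle_of_literals_and_clauses)
qed

lemma G_complement_induced_cycle_length:
  assumes cyc: "induced_cycle V (complement_adj (G_adj C)) cs"
  shows "length cs < 5"
proof (rule ccontr)
  assume "\<not> length cs < 5"
  then have n: "5 \<le> length cs"
    by simp
  then have "set cs \<subseteq> literal_or_clause_vertices"
    using G_long_induced_cycle_vertices long_complement_induced_cycle_vertex[OF cyc n] by blast
  with cyc n show False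
    by (rule G_no_long_complement_induced_cycle_of_literals_and_clauses)
qed

theorem lemma13:
  assumes "sat3_instance k C"
  shows "weakly_chordal (G_verts k C) (G_adj C)"
  unfolding weakly_chordal_def
  using G_induced_cycle_length G_complement_induced_cycle_length by blast

end
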